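(* If $f,g\in\mathbb{F}_q[x_1,\dots,x_n]$ are $*$-equivalent polynomials, then $N^*(f)=N^*(g)$.
   Context: $\mathbb{F}_q$ is a finite field with $q$ elements. For $D=(d_1,\dots,d_n)\in\mathbb{Z}_{\ge0}^n$ write $X^D=x_1^{d_1}\cdots x_n^{d_n}$. For a polynomial $f=\sum_{j=1}^k a_jX^{D_j}$ with all $a_j\in\mathbb{F}_q^*$ (a constant term corresponds to $D_j=0$), its augmented degree matrix $\tilde D_f$ is the $(n+1)\times k$ integer matrix whose $j$-th column is $(1,D_j)^T$. Two polynomials $f=\sum_{j=1}^k a_jX^{D_j}$ and $g=\sum_{j=1}^k a_jX^{D'_j}$ in $\mathbb{F}_q[x_1,\dots,x_n]$ are called $*$-equivalent if they have the same coefficient vector $(a_1,\dots,a_k)$ and the congruences $\tilde D_f v^T\equiv0\pmod{q-1}$ and $\tilde D_g v^T\equiv0\pmod{q-1}$ (in unknowns $v=(v_1,\dots,v_k)$ with $0\le v_j\le q-2$) have the same set of solutions. $N^*(f)$ denotes the number of roots of $f$ in $(\mathbb{F}_q^* )^n$. *)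

theory Defs
  imports Main "HOL-Library.FuncSet"
begin

text \<open>A polynomial f = sum_{j<k} a_j X^{D_j} in F[x_0,...,x_{n-1}] is represented by its
  coefficient vector a (indices j < k) and exponent vectors D j (entries D j i for i < n).\<close>

definition poly_eval :: "nat \<Rightarrow> nat \<Rightarrow> (nat \<Rightarrow> 'a::field) \<Rightarrow> (nat \<Rightarrow> nat \<Rightarrow> nat) \<Rightarrow> (nat \<Rightarrow> 'a) \<Rightarrow> 'a" where
  "poly_eval n k a D x = (\<Sum>j<k. a j * (\<Prod>i<n. x i ^ D j i))"

definition Nstar :: "nat \<Rightarrow> nat \<Rightarrow> (nat \<Rightarrow> 'a::{field,finite}) \<Rightarrow> (nat \<Rightarrow> nat \<Rightarrow> nat) \<Rightarrow> nat" where
  "Nstar n k a D = card {x \<in> PiE {..<n} (\<lambda>_. UNIV - {0}). poly_eval n k a D x = 0}"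

definition aug_deg :: "(nat \<Rightarrow> nat \<Rightarrow> nat) \<Rightarrow> nat \<Rightarrow> nat \<Rightarrow> nat" where
  "aug_deg D r j = (if r = 0 then 1 else D j (r - 1))"

definition cong_solutions :: "nat \<Rightarrow> nat \<Rightarrow> nat \<Rightarrow> (nat \<Rightarrow> nat \<Rightarrow> nat) \<Rightarrow> (nat \<Rightarrow> nat) set" where
  "cong_solutions q n k D =
     {v \<in> PiE {..<k} (\<lambda>_. {0..q-2}).
        \<forall>r\<le>n. (\<Sum>j<k. aug_deg D r j * v j) mod (q - 1) = 0}"

definition star_equiv :: "nat \<Rightarrow> nat \<Rightarrow> (nat \<Rightarrow> 'a::{field,finite}) \<Rightarrow> (nat \<Rightarrow> nat \<Rightarrow> nat) \<Rightarrow> (nat \<Rightarrow> nat \<Rightarrow> nat) \<Rightarrow> bool" where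
  "star_equiv n k a D D' \<longleftrightarrow>
     (\<forall>j<k. a j \<noteq> 0) \<and>
     cong_solutions (card (UNIV :: 'a set)) n k D = cong_solutions (card (UNIV :: 'a set)) n k D'"

end

theory Submission
  imports Defs "HOL-Library.Cardinality" "HOL-Algebra.Multiplicative_Group" "HOL-Algebra.Algebraic_Closure_Type"
begin

text \<open>Let m = q - 1 and write F for F_q - {0}. The map (t, x) \<mapsto> (t x^{D_j})_j from F^{n+1} to F^k
  is a group homomorphism whose exponent matrix is the augmented degree matrix. Its fibres over the
  image are cosets of the kernel, and (t, x) lands in the hyperplane \<Sum>_j a_j y_j = 0 exactly when
  x is a root of f, so m N^*(f) = |image \<inter> hyperplane| \<cdot> |kernel| with |kernel| = m^{n+1} / |image|.
  Thus N^*(f) depends only on the image. Identifying F with Z/m through a generator, the image is the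
  row space of the augmented degree matrix modulo m, and the solutions of the congruences form its
  orthogonal complement. Submodules of (Z/m)^k equal their double orthogonal, so the solution set
  determines the image.\<close>

lemma card_finite_field_ge_2: "2 \<le> CARD('a::{field,finite})"
proof -
  have "card {0, 1::'a} \<le> CARD('a)" by (rule card_mono) auto
  thus ?thesis by simp
qed

lemma finite_field_has_generator:
  "\<exists>g::'a::{field,finite}. (\<forall>x. x \<noteq> 0 \<longrightarrow> (\<exists>i. x = g ^ i)) \<and> (\<forall>n. g ^ n = 1 \<longleftrightarrow> (CARD('a) - 1) dvd n)"
proof -
  let ?R = "ring_of_type_algebra :: 'a ring"
  let ?G = "Multiplicative_Group.mult_of ?R"
  interpret field ?R by (rule field_from_type_algebra)
  interpret G: group ?G by (rule field_mult_group)
  have pow_eq: "x [^]\<^bsub>?G\<^esub> i = x ^ i" "x [^]\<^bsub>?R\<^esub> i = x ^ i" for x :: 'a and i :: nat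
    by (induction i) (auto simp: ring_of_type_algebra_def Multiplicative_Group.mult_of_def)
  have carrier: "carrier ?G = UNIV - {0}" by (simp add: ring_of_type_algebra_def)
  obtain g where g: "g \<in> carrier ?G" "carrier ?G = {g [^]\<^bsub>?R\<^esub> i | i::nat. i \<in> UNIV}"
    using finite_field_mult_group_has_gen by (auto simp: ring_of_type_algebra_def)
  have powers: "carrier ?G = range ((^) g)"
    using g(2) by (simp only: pow_eq) auto
  have "finite (carrier ?G)" using carrier by simp
  hence "G.ord g \<noteq> 0" using G.ord_ge_1 g(1) by (metis not_one_le_zero)
  hence "generate ?G {g} = range ((^) g)"
    using G.generate_pow_nat[OF g(1)] by (simp only: pow_eq) auto
  hence "G.ord g = card (range ((^) g))"
    using G.generate_pow_card[OF g(1)] by (simp only:)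
  also have "\<dots> = CARD('a) - 1"
    using powers carrier by (simp add: card_Diff_singleton)
  finally have "g ^ n = 1 \<longleftrightarrow> (CARD('a) - 1) dvd n" for n
    using G.pow_eq_id[OF g(1), of n]
    by (simp only: pow_eq) (simp add: Multiplicative_Group.mult_of_def ring_of_type_algebra_def)
  moreover have "\<exists>i. x = g ^ i" if "x \<noteq> 0" for x
    using that powers carrier by blast
  ultimately show ?thesis by blast
qed

lemma finite_field_pow_eq_one:
  fixes x :: "'a::{field,finite}"
  assumes "x \<noteq> 0" "(CARD('a) - 1) dvd n"
  shows "x ^ n = 1"
proof -
  obtain g :: 'a where g: "\<forall>x. x \<noteq> 0 \<longrightarrow> (\<exists>i. x = g ^ i)" "\<forall>n. g ^ n = 1 \<longleftrightarrow> (CARD('a) - 1) dvd n"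
    using finite_field_has_generator by blast
  obtain i where "x = g ^ i" using g(1) assms(1) by blast
  hence "x ^ n = (g ^ n) ^ i" by (metis power_mult mult.commute)
  moreover have "g ^ n = 1" using g(2) assms(2) by blast
  ultimately show ?thesis by simp
qed

lemma finite_field_pow_mod:
  fixes x :: "'a::{field,finite}"
  assumes "x \<noteq> 0"
  shows "x ^ (n mod (CARD('a) - 1)) = x ^ n"
proof -
  let ?m = "CARD('a) - 1"
  have "x ^ n = (x ^ (?m * (n div ?m))) * x ^ (n mod ?m)"
    by (simp flip: power_add)
  thus ?thesis using finite_field_pow_eq_one[OF assms] by simp
qed

definition dot :: "nat \<Rightarrow> (nat \<Rightarrow> int) \<Rightarrow> (nat \<Rightarrow> int) \<Rightarrow> int" where
  "dot k u v = (\<Sum>j<k. u j * v j)"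

definition int_submodule :: "(nat \<Rightarrow> int) set \<Rightarrow> bool" where
  "int_submodule L \<longleftrightarrow> (\<lambda>_. 0) \<in> L \<and> (\<forall>u\<in>L. \<forall>w\<in>L. (\<lambda>j. u j + w j) \<in> L) \<and>
     (\<forall>u\<in>L. \<forall>c. (\<lambda>j. c * u j) \<in> L)"

lemma dot_add_scale: "dot k (\<lambda>j. u j + c * w j) v = dot k u v + c * dot k w v"
  unfolding dot_def by (simp add: algebra_simps sum.distrib sum_distrib_left)

lemma dot_scale: "dot k (\<lambda>j. c * u j) v = c * dot k u v"
  unfolding dot_def by (simp add: algebra_simps sum_distrib_left)

lemma dot_Suc: "dot (Suc k) u v = dot k u v + u k * v k"
  unfolding dot_def by simp

lemma dot_cong: "(\<And>j. j < k \<Longrightarrow> u j = u' j) \<Longrightarrow> (\<And>j. j < k \<Longrightarrow> v j = v' j) \<Longrightarrow> dot k u v = dot k u' v'"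
  unfolding dot_def by (rule sum.cong) auto

lemma int_submodule_scale: "int_submodule L \<Longrightarrow> u \<in> L \<Longrightarrow> (\<lambda>j. c * u j) \<in> L"
  unfolding int_submodule_def by blast

lemma int_submodule_add_scale: "int_submodule L \<Longrightarrow> u \<in> L \<Longrightarrow> w \<in> L \<Longrightarrow> (\<lambda>j. u j + c * w j) \<in> L"
  unfolding int_submodule_def by metis

lemma int_submodule_coordinate_zero: "int_submodule L \<Longrightarrow> int_submodule {l \<in> L. l k = 0}"
  unfolding int_submodule_def by auto

lemma int_submodule_coordinate_generator:
  assumes L: "int_submodule L" and l: "l \<in> L" "l k \<noteq> 0"
  obtains b where "b \<in> L" "0 < b k" "\<forall>l\<in>L. b k dvd l k"
proof -
  define A where "A = {x::nat. 0 < x \<and> (\<exists>l\<in>L. l k = int x)}"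
  have "(\<lambda>j. sgn (l k) * l j) \<in> L" by (rule int_submodule_scale[OF L l(1)])
  moreover have "sgn (l k) * l k = int (nat \<bar>l k\<bar>)" by (simp add: sgn_if)
  ultimately have "nat \<bar>l k\<bar> \<in> A" unfolding A_def using l(2) by force
  hence "(LEAST x. x \<in> A) \<in> A" by (rule LeastI)
  then obtain b where b: "b \<in> L" "b k = int (LEAST x. x \<in> A)" "0 < b k" unfolding A_def by auto
  have "b k dvd l' k" if l': "l' \<in> L" for l'
  proof (rule ccontr)
    let ?r = "l' k mod b k"
    assume "\<not> b k dvd l' k"
    hence "?r \<noteq> 0" by (simp add: dvd_eq_mod_eq_0)
    hence r: "0 < ?r" "?r < b k"
      using b(3) pos_mod_sign[of "b k" "l' k"] pos_mod_bound[of "b k" "l' k"] by linarith+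
    let ?l = "\<lambda>j. l' j + (- (l' k div b k)) * b j"
    have "?l \<in> L" by (rule int_submodule_add_scale[OF L l' b(1)])
    moreover have "?l k = int (nat ?r)"
      using r(1) by (simp add: minus_div_mult_eq_mod[symmetric] algebra_simps)
    ultimately have "nat ?r \<in> A" unfolding A_def using r(1) by (intro CollectI conjI bexI) simp_all
    hence "(LEAST x. x \<in> A) \<le> nat ?r" by (rule Least_le)
    thus False using r b(2) by linarith
  qed
  thus ?thesis using that b(1,3) by blast
qed

lemma orthogonal_mod_coordinate_dvd:
  fixes m :: int
  assumes m: "0 < m" and mk: "(\<lambda>i. if i = k then m else 0) \<in> L"
    and b: "0 < b k" "\<forall>l\<in>L. b k dvd l k"
    and e: "\<forall>v. (\<forall>l\<in>L. m dvd dot (Suc k) l v) \<longrightarrow> m dvd dot (Suc k) e v"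
  shows "b k dvd e k"
proof -
  obtain c where c: "m = b k * c" using b(2) mk by force
  have "0 < c" using m b(1) c by (simp add: zero_less_mult_iff)
  define v where "v = (\<lambda>j. if j = k then c else 0)"
  have dot_v: "dot (Suc k) u v = u k * c" for u
  proof -
    have "dot k u v = 0" unfolding dot_def v_def by (rule sum.neutral) auto
    thus ?thesis by (simp add: dot_Suc v_def)
  qed
  have "\<forall>l\<in>L. m dvd dot (Suc k) l v"
    using b(2) c by (auto simp: dot_v)
  hence "m dvd dot (Suc k) e v" using e by blast
  hence "b k * c dvd e k * c" using c by (simp add: dot_v)
  thus ?thesis using \<open>0 < c\<close> by simp
qed

text \<open>A test vector u for the sublattice {l \<in> L. l k = 0} is extended by a k-th entry making b
  orthogonal to it; every l \<in> L differs from a multiple of b by an element of the sublattice.\<close>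

lemma orthogonal_mod_restrict:
  fixes m :: int
  assumes m: "0 < m" and L: "int_submodule L" and mk: "(\<lambda>i. if i = k then m else 0) \<in> L"
    and b: "b \<in> L" "0 < b k" "\<forall>l\<in>L. b k dvd l k"
    and e: "\<forall>v. (\<forall>l\<in>L. m dvd dot (Suc k) l v) \<longrightarrow> m dvd dot (Suc k) e v" and s: "e k = b k * s"
  shows "\<forall>u. (\<forall>l\<in>{l \<in> L. l k = 0}. m dvd dot k l u) \<longrightarrow> m dvd dot k (\<lambda>j. e j + (- s) * b j) u"
proof (intro allI impI)
  fix u assume u: "\<forall>l\<in>{l \<in> L. l k = 0}. m dvd dot k l u"
  obtain c where c: "m = b k * c" using b(3) mk by force
  have "0 < c" using m b(2) c by (simp add: zero_less_mult_iff)
  have "(\<lambda>j. c * b j + (- 1) * (if j = k then m else 0)) \<in> L"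
    by (rule int_submodule_add_scale[OF L int_submodule_scale[OF L b(1)] mk])
  hence "m dvd dot k (\<lambda>j. c * b j + (- 1) * (if j = k then m else 0)) u"
    using u c by simp
  also have "dot k (\<lambda>j. c * b j + (- 1) * (if j = k then m else 0)) u = c * dot k b u"
    by (simp add: dot_cong[of k _ "\<lambda>j. c * b j" u u] dot_scale)
  finally have "b k * c dvd dot k b u * c" using c by (simp add: mult.commute)
  then obtain t where t: "dot k b u = b k * t" using \<open>0 < c\<close> by auto
  define v where "v = (\<lambda>j. if j = k then - t else u j)"
  have dot_v: "dot (Suc k) l v = dot k l u - l k * t" for l
    using dot_cong[of k l l v u] by (simp add: dot_Suc v_def)
  have "m dvd dot (Suc k) l v" if l: "l \<in> L" for l
  proof -
    obtain s' where s': "l k = b k * s'" using b(3) l by blast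
    have "(\<lambda>j. l j + (- s') * b j) \<in> L" by (rule int_submodule_add_scale[OF L l b(1)])
    hence "m dvd dot k (\<lambda>j. l j + (- s') * b j) u" using u s' by simp
    also have "dot k (\<lambda>j. l j + (- s') * b j) u = dot (Suc k) l v"
      by (simp only: dot_add_scale dot_v t s') (simp add: algebra_simps)
    finally show ?thesis .
  qed
  hence "m dvd dot (Suc k) e v" using e by blast
  also have "dot (Suc k) e v = dot k (\<lambda>j. e j + (- s) * b j) u"
    by (simp only: dot_add_scale dot_v t s) (simp add: algebra_simps)
  finally show "m dvd dot k (\<lambda>j. e j + (- s) * b j) u" .
qed

lemma double_orthogonal_mod:
  fixes m :: int
  assumes "0 < m"
  shows "int_submodule L \<Longrightarrow> \<forall>j<k. (\<lambda>i. if i = j then m else 0) \<in> L \<Longrightarrow>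
    \<forall>v. (\<forall>l\<in>L. m dvd dot k l v) \<longrightarrow> m dvd dot k e v \<Longrightarrow> \<exists>l\<in>L. \<forall>j<k. m dvd l j - e j"
proof (induction k arbitrary: L e)
  case 0
  thus ?case by (auto simp: int_submodule_def)
next
  case (Suc k)
  have mk: "(\<lambda>i. if i = k then m else 0) \<in> L" using Suc.prems(2) by simp
  obtain b where b: "b \<in> L" "0 < b k" "\<forall>l\<in>L. b k dvd l k"
    using int_submodule_coordinate_generator[OF Suc.prems(1) mk, where k=k] assms by auto
  obtain s where s: "e k = b k * s"
    using orthogonal_mod_coordinate_dvd[where b=b, OF assms mk b(2,3) Suc.prems(3)] by blast
  have "\<forall>j<k. (\<lambda>i. if i = j then m else 0) \<in> {l \<in> L. l k = 0}" using Suc.prems(2) by auto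
  then obtain l0 where l0: "l0 \<in> L" "l0 k = 0" "\<forall>j<k. m dvd l0 j - (e j + (- s) * b j)"
    using Suc.IH[OF int_submodule_coordinate_zero[OF Suc.prems(1)] _
        orthogonal_mod_restrict[OF assms Suc.prems(1) mk b Suc.prems(3) s]] by blast
  have "(\<lambda>j. l0 j + s * b j) \<in> L" by (rule int_submodule_add_scale[OF Suc.prems(1) l0(1) b(1)])
  moreover have "m dvd (l0 j + s * b j) - e j" if "j < Suc k" for j
  proof (cases "j = k")
    case True
    thus ?thesis using l0(2) s by (simp add: mult.commute)
  next
    case False
    hence "m dvd l0 j - (e j + (- s) * b j)" using l0(3) that by simp
    thus ?thesis by (simp add: algebra_simps)
  qed
  ultimately show ?case by (intro bexI[of _ "\<lambda>j. l0 j + s * b j"] allI impI)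
qed

definition torus :: "'i set \<Rightarrow> ('i \<Rightarrow> 'a::field) set" where
  "torus I = PiE I (\<lambda>_. UNIV - {0})"

definition monomial_map :: "'i set \<Rightarrow> 'j set \<Rightarrow> ('i \<Rightarrow> 'j \<Rightarrow> nat) \<Rightarrow> ('i \<Rightarrow> 'a::field) \<Rightarrow> 'j \<Rightarrow> 'a" where
  "monomial_map I J A p = (\<lambda>j\<in>J. \<Prod>i\<in>I. p i ^ A i j)"

lemma finite_torus: "finite I \<Longrightarrow> finite (torus I :: ('i \<Rightarrow> 'a::{field,finite}) set)"
  unfolding torus_def by (rule finite_PiE) auto

lemma monomial_map_in_torus: "p \<in> torus I \<Longrightarrow> monomial_map I J A p \<in> torus J"
  unfolding torus_def monomial_map_def by (cases "finite I") (auto simp: PiE_iff)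

lemma monomial_map_mult:
  "monomial_map I J A (\<lambda>i\<in>I. p i * p' i) = (\<lambda>j\<in>J. monomial_map I J A p j * monomial_map I J A p' j)"
proof -
  have "(\<Prod>i\<in>I. (\<lambda>i\<in>I. p i * p' i) i ^ A i j) = (\<Prod>i\<in>I. p i ^ A i j) * (\<Prod>i\<in>I. p' i ^ A i j)" for j
    by (simp add: power_mult_distrib prod.distrib[symmetric] cong: prod.cong)
  thus ?thesis unfolding monomial_map_def by auto
qed

lemma monomial_map_divide:
  "monomial_map I J A (\<lambda>i\<in>I. p i / p' i) = (\<lambda>j\<in>J. monomial_map I J A p j / monomial_map I J A p' j)"
proof -
  have "(\<Prod>i\<in>I. (\<lambda>i\<in>I. p i / p' i) i ^ A i j) = (\<Prod>i\<in>I. p i ^ A i j) / (\<Prod>i\<in>I. p' i ^ A i j)" for j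
    by (simp add: power_divide prod_dividef[symmetric] cong: prod.cong)
  thus ?thesis unfolding monomial_map_def by auto
qed

lemma card_monomial_map_fiber:
  fixes p0 :: "'i \<Rightarrow> 'a::field"
  assumes p0: "p0 \<in> torus I"
  shows "card {p \<in> torus I. monomial_map I J A p = monomial_map I J A p0} =
    card {p \<in> torus I. monomial_map I J A p = (\<lambda>j\<in>J. 1 :: 'a)}"
proof -
  let ?\<phi> = "monomial_map I J A"
  have p0_nz: "p0 i \<noteq> 0" if "i \<in> I" for i using p0 that by (auto simp: torus_def PiE_iff)
  have \<phi>p0_nz: "?\<phi> p0 j \<noteq> 0" if "j \<in> J" for j
    using monomial_map_in_torus[OF p0, of J A] that by (auto simp: torus_def PiE_iff)
  have "bij_betw (\<lambda>p. \<lambda>i\<in>I. p i * p0 i) {p \<in> torus I. ?\<phi> p = (\<lambda>j\<in>J. 1)} {p \<in> torus I. ?\<phi> p = ?\<phi> p0}"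
  proof (rule bij_betw_byWitness[where f'="\<lambda>p. \<lambda>i\<in>I. p i / p0 i"])
    show "\<forall>p\<in>{p \<in> torus I. ?\<phi> p = (\<lambda>j\<in>J. 1)}. (\<lambda>i\<in>I. (\<lambda>i\<in>I. p i * p0 i) i / p0 i) = p"
      using p0_nz by (auto simp: torus_def PiE_def extensional_def fun_eq_iff)
    show "\<forall>p\<in>{p \<in> torus I. ?\<phi> p = ?\<phi> p0}. (\<lambda>i\<in>I. (\<lambda>i\<in>I. p i / p0 i) i * p0 i) = p"
      using p0_nz by (auto simp: torus_def PiE_def extensional_def fun_eq_iff)
    show "(\<lambda>p. \<lambda>i\<in>I. p i * p0 i) ` {p \<in> torus I. ?\<phi> p = (\<lambda>j\<in>J. 1)} \<subseteq> {p \<in> torus I. ?\<phi> p = ?\<phi> p0}"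
      using p0_nz by (auto simp: monomial_map_mult) (auto simp: torus_def monomial_map_def)
    show "(\<lambda>p. \<lambda>i\<in>I. p i / p0 i) ` {p \<in> torus I. ?\<phi> p = ?\<phi> p0} \<subseteq> {p \<in> torus I. ?\<phi> p = (\<lambda>j\<in>J. 1)}"
      using p0_nz \<phi>p0_nz by (auto simp: monomial_map_divide) (auto simp: torus_def)
  qed
  thus ?thesis by (rule bij_betw_same_card[symmetric])
qed

lemma card_preimage_constant_fibers:
  assumes "finite P" and "\<And>y. y \<in> f ` P \<Longrightarrow> card {p \<in> P. f p = y} = c"
  shows "card {p \<in> P. f p \<in> Z} = card (f ` P \<inter> Z) * c"
proof -
  have "{p \<in> P. f p \<in> Z} = (\<Union>y\<in>f ` P \<inter> Z. {p \<in> P. f p = y})" by auto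
  also have "card \<dots> = (\<Sum>y\<in>f ` P \<inter> Z. card {p \<in> P. f p = y})"
    using assms(1) by (intro card_UN_disjoint) auto
  also have "\<dots> = card (f ` P \<inter> Z) * c" using assms(2) by simp
  finally show ?thesis .
qed

lemma card_monomial_map_preimage:
  fixes Z :: "('j \<Rightarrow> 'a::{field,finite}) set"
  assumes "finite I"
  shows "card {p \<in> torus I. monomial_map I J A p \<in> Z} =
    card (monomial_map I J A ` torus I \<inter> Z) *
    card {p \<in> torus I. monomial_map I J A p = (\<lambda>j\<in>J. 1 :: 'a)}"
  using finite_torus[OF assms] by (rule card_preimage_constant_fibers) (auto simp: card_monomial_map_fiber)

definition exponent_solutions :: "nat \<Rightarrow> 'i set \<Rightarrow> nat \<Rightarrow> ('i \<Rightarrow> nat \<Rightarrow> nat) \<Rightarrow> (nat \<Rightarrow> nat) set" where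
  "exponent_solutions q I k A =
     {v \<in> PiE {..<k} (\<lambda>_. {0..q - 2}). \<forall>r\<in>I. (\<Sum>j<k. A r j * v j) mod (q - 1) = 0}"

definition annihilator :: "nat \<Rightarrow> (nat \<Rightarrow> nat) set \<Rightarrow> (nat \<Rightarrow> 'a::field) set" where
  "annihilator k V = {y \<in> torus {..<k}. \<forall>v\<in>V. (\<Prod>j<k. y j ^ v j) = 1}"

lemma monomial_map_image_subset_annihilator:
  "monomial_map I {..<k} A ` torus I \<subseteq>
    (annihilator k (exponent_solutions CARD('a) I k A) :: (nat \<Rightarrow> 'a::{field,finite}) set)"
proof (rule image_subsetI)
  fix p :: "'b \<Rightarrow> 'a" assume p: "p \<in> torus I"
  have "(\<Prod>j<k. monomial_map I {..<k} A p j ^ v j) = 1" if v: "v \<in> exponent_solutions CARD('a) I k A" for v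
  proof -
    have "(\<Prod>j<k. monomial_map I {..<k} A p j ^ v j) = (\<Prod>j<k. \<Prod>i\<in>I. p i ^ (A i j * v j))"
      by (simp add: monomial_map_def prod_power_distrib power_mult)
    also have "\<dots> = (\<Prod>i\<in>I. p i ^ (\<Sum>j<k. A i j * v j))"
      by (subst prod.swap) (simp add: power_sum)
    also have "\<dots> = 1"
      using p v by (intro prod.neutral ballI finite_field_pow_eq_one)
        (auto simp: torus_def exponent_solutions_def PiE_iff dvd_eq_mod_eq_0)
    finally show ?thesis .
  qed
  thus "monomial_map I {..<k} A p \<in> annihilator k (exponent_solutions CARD('a) I k A)"
    using monomial_map_in_torus[OF p] by (simp add: annihilator_def)
qed

definition row_lattice :: "int \<Rightarrow> 'i set \<Rightarrow> ('i \<Rightarrow> nat \<Rightarrow> nat) \<Rightarrow> (nat \<Rightarrow> int) set" where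
  "row_lattice m I A = {l. \<exists>c z. \<forall>j. l j = (\<Sum>r\<in>I. c r * int (A r j)) + m * z j}"

lemma int_submodule_row_lattice: "int_submodule (row_lattice m I A)"
  unfolding int_submodule_def
proof (intro conjI ballI allI)
  show "(\<lambda>_. 0) \<in> row_lattice m I A"
    unfolding row_lattice_def by (auto intro!: exI[of _ "\<lambda>_. 0"])
next
  fix u w assume "u \<in> row_lattice m I A" "w \<in> row_lattice m I A"
  then obtain c z c' z' where "\<forall>j. u j = (\<Sum>r\<in>I. c r * int (A r j)) + m * z j"
    "\<forall>j. w j = (\<Sum>r\<in>I. c' r * int (A r j)) + m * z' j" unfolding row_lattice_def by blast
  thus "(\<lambda>j. u j + w j) \<in> row_lattice m I A" unfolding row_lattice_def
    by (intro CollectI exI[of _ "\<lambda>r. c r + c' r"] exI[of _ "\<lambda>j. z j + z' j"])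
      (simp add: algebra_simps sum.distrib)
next
  fix u c0 assume "u \<in> row_lattice m I A"
  then obtain c z where "\<forall>j. u j = (\<Sum>r\<in>I. c r * int (A r j)) + m * z j"
    unfolding row_lattice_def by blast
  thus "(\<lambda>j. c0 * u j) \<in> row_lattice m I A" unfolding row_lattice_def
    by (intro CollectI exI[of _ "\<lambda>r. c0 * c r"] exI[of _ "\<lambda>j. c0 * z j"])
      (simp add: algebra_simps sum_distrib_left)
qed

lemma row_lattice_unit: "(\<lambda>i. if i = j then m else 0) \<in> row_lattice m I A"
  unfolding row_lattice_def
  by (intro CollectI exI[of _ "\<lambda>_. 0"] exI[of _ "\<lambda>i. if i = j then 1 else 0"]) simp

lemma row_lattice_row:
  assumes "finite I" "r \<in> I"
  shows "(\<lambda>j. int (A r j)) \<in> row_lattice m I A"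
proof -
  have "I \<inter> {r} = {r}" using assms by auto
  thus ?thesis unfolding row_lattice_def
    using assms(1) by (intro CollectI exI[of _ "\<lambda>r'. of_bool (r' = r)"] exI[of _ "\<lambda>_. 0"]) simp
qed

lemma dot_mod_reduction: "m dvd dot k u (\<lambda>j. v j mod m) - dot k u v"
proof -
  have "dot k u (\<lambda>j. v j mod m) - dot k u v = (\<Sum>j<k. u j * (v j mod m - v j))"
    unfolding dot_def by (simp add: sum_subtractf algebra_simps)
  also have "m dvd \<dots>"
    by (intro dvd_sum dvd_mult) (simp add: mod_eq_dvd_iff[symmetric])
  finally show ?thesis .
qed

lemma mod_reduction_in_exponent_solutions:
  fixes v :: "nat \<Rightarrow> int"
  assumes q: "2 \<le> q" and orth: "\<forall>r\<in>I. int (q - 1) dvd dot k (\<lambda>j. int (A r j)) v"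
  shows "(\<lambda>j\<in>{..<k}. nat (v j mod int (q - 1))) \<in> exponent_solutions q I k A"
proof -
  let ?m = "int (q - 1)"
  let ?v = "\<lambda>j\<in>{..<k}. nat (v j mod ?m)"
  have m: "0 < ?m" using q by simp
  have "?v \<in> PiE {..<k} (\<lambda>_. {0..q - 2})"
  proof (rule PiE_I)
    fix j assume "j \<in> {..<k}"
    have "v j mod ?m < ?m" using m by simp
    thus "?v j \<in> {0..q - 2}" using \<open>j \<in> {..<k}\<close> by auto
  qed auto
  moreover have "(\<Sum>j<k. A r j * ?v j) mod (q - 1) = 0" if r: "r \<in> I" for r
  proof -
    have "int (\<Sum>j<k. A r j * ?v j) = dot k (\<lambda>j. int (A r j)) (\<lambda>j. v j mod ?m)"
      unfolding dot_def of_nat_sum using pos_mod_sign[OF m] by (intro sum.cong) simp_all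
    moreover have "?m dvd dot k (\<lambda>j. int (A r j)) (\<lambda>j. v j mod ?m)"
      using dvd_add[OF dot_mod_reduction[of ?m k "\<lambda>j. int (A r j)" v] orth[rule_format, OF r]] by simp
    ultimately have "int (q - 1) dvd int (\<Sum>j<k. A r j * ?v j)" by simp
    thus ?thesis by (simp only: int_dvd_int_iff flip: dvd_eq_mod_eq_0)
  qed
  ultimately show ?thesis unfolding exponent_solutions_def by blast
qed

lemma annihilator_exponents_orthogonal:
  fixes y :: "nat \<Rightarrow> 'a::{field,finite}" and g :: 'a
  assumes I: "finite I" and y: "y \<in> annihilator k (exponent_solutions CARD('a) I k A)"
    and g: "\<forall>n. g ^ n = 1 \<longleftrightarrow> (CARD('a) - 1) dvd n" and e: "\<forall>j<k. y j = g ^ e j"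
  shows "\<forall>v. (\<forall>l\<in>row_lattice (int (CARD('a) - 1)) I A. int (CARD('a) - 1) dvd dot k l v) \<longrightarrow>
    int (CARD('a) - 1) dvd dot k (\<lambda>j. int (e j)) v"
proof (intro allI impI)
  let ?m = "int (CARD('a) - 1)"
  fix v assume orth: "\<forall>l\<in>row_lattice ?m I A. ?m dvd dot k l v"
  let ?v = "\<lambda>j\<in>{..<k}. nat (v j mod ?m)"
  have m: "0 < ?m" using card_finite_field_ge_2[where 'a='a] by simp
  have "?v \<in> exponent_solutions CARD('a) I k A"
    using orth row_lattice_row[OF I] card_finite_field_ge_2 by (intro mod_reduction_in_exponent_solutions) auto
  hence "(\<Prod>j<k. y j ^ ?v j) = 1" using y by (auto simp: annihilator_def)
  moreover have "(\<Prod>j<k. y j ^ ?v j) = g ^ (\<Sum>j<k. e j * ?v j)"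
    unfolding power_sum using e by (intro prod.cong) (simp_all add: power_mult)
  ultimately have "CARD('a) - 1 dvd (\<Sum>j<k. e j * ?v j)" using g by simp
  hence "?m dvd int (\<Sum>j<k. e j * ?v j)" by (simp only: int_dvd_int_iff)
  also have "int (\<Sum>j<k. e j * ?v j) = dot k (\<lambda>j. int (e j)) (\<lambda>j. v j mod ?m)"
    unfolding dot_def of_nat_sum using pos_mod_sign[OF m] by (intro sum.cong) simp_all
  finally have "?m dvd dot k (\<lambda>j. int (e j)) (\<lambda>j. v j mod ?m)" .
  from dvd_diff[OF this dot_mod_reduction[of ?m k "\<lambda>j. int (e j)" v]]
  show "?m dvd dot k (\<lambda>j. int (e j)) v" by simp
qed

lemma row_lattice_congruent_in_image:
  fixes y :: "nat \<Rightarrow> 'a::{field,finite}" and g :: 'a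
  assumes g: "g \<noteq> 0" and y: "y \<in> torus {..<k}" and e: "\<forall>j<k. y j = g ^ e j"
    and l: "l \<in> row_lattice (int (CARD('a) - 1)) I A" "\<forall>j<k. int (CARD('a) - 1) dvd l j - int (e j)"
  shows "y \<in> monomial_map I {..<k} A ` torus I"
proof -
  let ?m = "int (CARD('a) - 1)"
  have m: "0 < ?m" using card_finite_field_ge_2[where 'a='a] by simp
  obtain c z where cz: "\<forall>j. l j = (\<Sum>r\<in>I. c r * int (A r j)) + ?m * z j"
    using l(1) unfolding row_lattice_def by blast
  define p where "p = (\<lambda>r\<in>I. g ^ nat (c r mod ?m))"
  have p: "p \<in> torus I" using g unfolding p_def torus_def by auto
  have "monomial_map I {..<k} A p j = y j" if j: "j < k" for j
  proof -
    define E where "E = (\<Sum>r\<in>I. nat (c r mod ?m) * A r j)"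
    have "monomial_map I {..<k} A p j = g ^ E"
      unfolding E_def power_sum using j by (simp add: monomial_map_def p_def power_mult cong: prod.cong)
    have "int E - l j = (\<Sum>r\<in>I. (c r mod ?m - c r) * int (A r j)) - ?m * z j"
      unfolding E_def of_nat_sum cz[rule_format] using pos_mod_sign[OF m] by (simp add: sum_subtractf algebra_simps)
    also have "?m dvd \<dots>"
      by (rule dvd_diff, rule dvd_sum, rule dvd_mult2) (simp_all add: mod_eq_dvd_iff[symmetric])
    finally have "?m dvd (int E - l j) + (l j - int (e j))" using l(2) j by (intro dvd_add) auto
    hence "int E mod ?m = int (e j) mod ?m" by (simp only: mod_eq_dvd_iff) simp
    hence "E mod (CARD('a) - 1) = e j mod (CARD('a) - 1)" by (simp only: of_nat_eq_iff flip: zmod_int)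
    hence "g ^ E = g ^ e j" by (metis finite_field_pow_mod[OF g])
    thus ?thesis using \<open>monomial_map I {..<k} A p j = g ^ E\<close> e j by simp
  qed
  hence "monomial_map I {..<k} A p = y"
    using y by (auto simp: fun_eq_iff monomial_map_def torus_def PiE_def extensional_def)
  thus ?thesis using p by blast
qed

lemma monomial_map_image_eq_annihilator:
  assumes I: "finite I"
  shows "monomial_map I {..<k} A ` torus I =
    (annihilator k (exponent_solutions CARD('a) I k A) :: (nat \<Rightarrow> 'a::{field,finite}) set)"
    (is "?image = ?annihilator")
proof
  show "?image \<subseteq> ?annihilator" by (rule monomial_map_image_subset_annihilator)
next
  let ?m = "int (CARD('a) - 1)"
  have m: "0 < ?m" using card_finite_field_ge_2[where 'a='a] by simp
  show "?annihilator \<subseteq> ?image"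
  proof
    fix y assume y: "y \<in> ?annihilator"
    obtain g :: 'a where g: "\<forall>x. x \<noteq> 0 \<longrightarrow> (\<exists>i. x = g ^ i)" "\<forall>n. g ^ n = 1 \<longleftrightarrow> (CARD('a) - 1) dvd n"
      using finite_field_has_generator by blast
    have "g ^ (CARD('a) - 1) = 1" using g(2) by simp
    hence "g \<noteq> 0" using m by (cases "g = 0") (simp_all add: power_0_left)
    have "\<forall>j. \<exists>i. j < k \<longrightarrow> y j = g ^ i"
      using y g(1) by (auto simp: annihilator_def torus_def PiE_iff)
    hence "\<exists>e. \<forall>j. j < k \<longrightarrow> y j = g ^ e j" by (rule choice)
    then obtain e where e: "\<forall>j<k. y j = g ^ e j" by blast
    have "\<forall>j<k. (\<lambda>i. if i = j then ?m else 0) \<in> row_lattice ?m I A"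
      using row_lattice_unit by blast
    then obtain l where "l \<in> row_lattice ?m I A" "\<forall>j<k. ?m dvd l j - int (e j)"
      using double_orthogonal_mod[OF m int_submodule_row_lattice _
          annihilator_exponents_orthogonal[OF I y g(2) e]] by blast
    thus "y \<in> ?image"
      using row_lattice_congruent_in_image[OF \<open>g \<noteq> 0\<close> _ e] y by (auto simp: annihilator_def)
  qed
qed

lemma cong_solutions_eq_exponent_solutions:
  "cong_solutions q n k D = exponent_solutions q {..n} k (aug_deg D)"
  unfolding cong_solutions_def exponent_solutions_def by auto

lemma bij_betw_torus_atMost:
  "bij_betw (\<lambda>p. (p 0, \<lambda>i\<in>{..<n}. p (Suc i)))
    (torus {..n} :: (nat \<Rightarrow> 'a::field) set) ((UNIV - {0}) \<times> torus {..<n})"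
proof -
  let ?split = "\<lambda>p :: nat \<Rightarrow> 'a. (p 0, \<lambda>i\<in>{..<n}. p (Suc i))"
  let ?join = "\<lambda>z :: 'a \<times> (nat \<Rightarrow> 'a). \<lambda>r\<in>{..n}. if r = 0 then fst z else snd z (r - 1)"
  have "\<forall>p\<in>torus {..n}. ?join (?split p) = p"
    by (auto simp: torus_def PiE_def extensional_def fun_eq_iff gr0_conv_Suc)
  moreover have "\<forall>z\<in>(UNIV - {0}) \<times> torus {..<n}. ?split (?join z) = z"
    by (auto simp: torus_def PiE_def extensional_def fun_eq_iff)
  moreover have "?split ` torus {..n} \<subseteq> (UNIV - {0}) \<times> torus {..<n}"
  proof (rule image_subsetI)
    fix p :: "nat \<Rightarrow> 'a" assume "p \<in> torus {..n}"
    hence "\<forall>r\<le>n. p r \<noteq> 0" by (simp add: torus_def PiE_iff)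
    thus "?split p \<in> (UNIV - {0}) \<times> torus {..<n}" by (simp add: torus_def)
  qed
  moreover have "?join ` ((UNIV - {0}) \<times> torus {..<n}) \<subseteq> torus {..n}"
  proof (rule image_subsetI)
    fix z :: "'a \<times> (nat \<Rightarrow> 'a)" assume z: "z \<in> (UNIV - {0}) \<times> torus {..<n}"
    have "?join z r \<noteq> 0" if "r \<le> n" for r
    proof (cases r)
      case 0
      thus ?thesis using z by auto
    next
      case (Suc i)
      have "snd z \<in> torus {..<n}" using z by auto
      moreover have "i \<in> {..<n}" using Suc that by simp
      ultimately have "snd z i \<noteq> 0" unfolding torus_def by (auto dest: PiE_mem)
      thus ?thesis using Suc that by simp
    qed
    thus "?join z \<in> torus {..n}" unfolding torus_def by (intro PiE_I) auto
  qed
  ultimately show ?thesis by (rule bij_betw_byWitness)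
qed

lemma monomial_map_aug_deg:
  "j < k \<Longrightarrow> monomial_map {..n} {..<k} (aug_deg D) p j = p 0 * (\<Prod>i<n. p (Suc i) ^ D j i)"
  by (simp add: monomial_map_def aug_deg_def prod.atMost_shift)

lemma card_torus_roots_aug_deg:
  fixes a :: "nat \<Rightarrow> 'a::{field,finite}"
  shows "card {p \<in> torus {..n}. monomial_map {..n} {..<k} (aug_deg D) p \<in> {y. (\<Sum>j<k. a j * y j) = 0}} =
    (CARD('a) - 1) * Nstar n k a D"
proof -
  let ?split = "\<lambda>p :: nat \<Rightarrow> 'a. (p 0, \<lambda>i\<in>{..<n}. p (Suc i))"
  let ?roots = "{x \<in> torus {..<n}. poly_eval n k a D x = 0}"
  have eval: "(\<Sum>j<k. a j * monomial_map {..n} {..<k} (aug_deg D) p j) =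
      fst (?split p) * poly_eval n k a D (snd (?split p))" for p
  proof -
    have "poly_eval n k a D (\<lambda>i\<in>{..<n}. p (Suc i)) = poly_eval n k a D (\<lambda>i. p (Suc i))"
      unfolding poly_eval_def by (intro sum.cong prod.cong refl) simp_all
    thus ?thesis by (simp add: monomial_map_aug_deg poly_eval_def sum_distrib_left mult_ac)
  qed
  have "bij_betw ?split
      {p \<in> torus {..n}. monomial_map {..n} {..<k} (aug_deg D) p \<in> {y. (\<Sum>j<k. a j * y j) = 0}}
      {z \<in> (UNIV - {0}) \<times> torus {..<n}. fst z * poly_eval n k a D (snd z) = 0}"
    by (rule bij_betw_Collect[OF bij_betw_torus_atMost]) (simp add: eval)
  moreover have "{z \<in> (UNIV - {0}) \<times> torus {..<n}. fst z * poly_eval n k a D (snd z) = 0} =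
      (UNIV - {0}) \<times> ?roots"
    by auto
  ultimately have "card {p \<in> torus {..n}. monomial_map {..n} {..<k} (aug_deg D) p \<in> {y. (\<Sum>j<k. a j * y j) = 0}} =
      card ((UNIV - {0::'a}) \<times> ?roots)"
    by (simp add: bij_betw_same_card)
  thus ?thesis by (simp add: card_cartesian_product card_Diff_singleton Nstar_def torus_def)
qed

theorem mainTheorem6:
  fixes a :: "nat \<Rightarrow> 'a::{field,finite}"
    and D D' :: "nat \<Rightarrow> nat \<Rightarrow> nat"
    and n k :: nat
  assumes "star_equiv n k a D D'"
  shows "Nstar n k a D = Nstar n k a D'"
  \<comment> \<open>The coefficients being nonzero, which is part of *-equivalence, is not needed.\<close>
proof -
  let ?T = "torus {..n} :: (nat \<Rightarrow> 'a) set"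
  let ?Z = "{y. (\<Sum>j<k. a j * y j) = 0}"
  let ?kernel = "\<lambda>E. card {p \<in> ?T. monomial_map {..n} {..<k} E p = (\<lambda>j\<in>{..<k}. 1)}"
  have image: "monomial_map {..n} {..<k} (aug_deg D) ` ?T = monomial_map {..n} {..<k} (aug_deg D') ` ?T"
    using assms by (simp add: star_equiv_def cong_solutions_eq_exponent_solutions monomial_map_image_eq_annihilator)
  have card_T: "card ?T = card (monomial_map {..n} {..<k} E ` ?T) * ?kernel E" for E
    using card_monomial_map_preimage[where I="{..n}" and Z=UNIV and J="{..<k}" and A=E] by simp
  have "(\<lambda>i\<in>{..n}. 1) \<in> ?T" by (simp add: torus_def)
  hence "card ?T \<noteq> 0" using finite_torus[of "{..n}", where 'a='a] by auto
  hence kernel: "?kernel (aug_deg D) = ?kernel (aug_deg D')"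
    using card_T[of "aug_deg D"] card_T[of "aug_deg D'"] image by simp
  have "(CARD('a) - 1) * Nstar n k a D = (CARD('a) - 1) * Nstar n k a D'"
    using card_monomial_map_preimage[where I="{..n}" and Z="?Z" and J="{..<k}" and A="aug_deg D"]
      card_monomial_map_preimage[where I="{..n}" and Z="?Z" and J="{..<k}" and A="aug_deg D'"]
      card_torus_roots_aug_deg[where a=a and D=D] card_torus_roots_aug_deg[where a=a and D=D'] image kernel
    by simp
  thus ?thesis using card_finite_field_ge_2[where 'a='a] by simp
qed

end
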